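(* (i) Let $(p,q)$ satisfy $\frac2p+\frac1q=1$, $1\le q<\infty$, and let $\beta>\frac{2q}{q+1}$. Then there is no constant $C$ such that for all $N\ge1$, all $\lambda\in\ell^\beta$ and all orthonormal systems $(f_j)$ in $L^2(\mathbf T)$ one has $\|\sum_j\lambda_j|\mathscr D_Nf_j|^2\|_{L^p_tL^q_x(\mathbf T\times\mathbf T)}\le CN^{1/p}\|\lambda\|_{\ell^\beta}$. (ii) Let $\beta>2$. Then there is no constant $C$ such that for all $N\ge1$, all $\lambda\in\ell^\beta$ and all orthonormal systems $(f_j)$ in $L^2(\mathbf T)$ one has $\|\sum_j\lambda_j|\mathscr D_Nf_j|^2\|_{L^2_tL^\infty_x(\mathbf T\times\mathbf T)}\le CN^{1/2}\|\lambda\|_{\ell^\beta}$.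
   Context: $\mathbf T=[0,2\pi)$, $S_N=\mathbb Z\cap[-N,N]$, $\mathscr F_xf(k)=\frac1{2\pi}\int_{\mathbf T}e^{-ixk}f(x)\,dx$, and $\mathscr D_Nf(t,x)=\frac1{2\pi}\sum_{n\in S_N}\mathscr F_xf(n)e^{i(xn+t\sqrt{n^2+n^4})}$. *)

theory Defs
  imports "HOL-Analysis.Analysis" "HOL-Probability.Essential_Supremum"
begin

definition torus :: "real set" where
  "torus = {0..<2*pi}"

definition Tmeas :: "real measure" where
  "Tmeas = lebesgue_on torus"

definition fourier_coeff :: "(real \<Rightarrow> complex) \<Rightarrow> int \<Rightarrow> complex" where
  "fourier_coeff f k = complex_of_real (1 / (2*pi)) *
     integral\<^sup>L Tmeas (\<lambda>x. exp (- \<i> * complex_of_real (x * real_of_int k)) * f x)"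

definition DN :: "nat \<Rightarrow> (real \<Rightarrow> complex) \<Rightarrow> real \<Rightarrow> real \<Rightarrow> complex" where
  "DN N f t x = complex_of_real (1 / (2*pi)) *
     (\<Sum>n\<in>{- int N..int N}. fourier_coeff f n *
        exp (\<i> * complex_of_real (x * real_of_int n
               + t * sqrt ((real_of_int n)^2 + (real_of_int n)^4))))"

definition ennpow :: "ennreal \<Rightarrow> real \<Rightarrow> ennreal" where
  "ennpow a r = (if a = \<infinity> then \<infinity> else ennreal (enn2real a powr r))"

definition Lpnorm :: "ereal \<Rightarrow> (real \<Rightarrow> ennreal) \<Rightarrow> ennreal" where
  "Lpnorm p g = (if p = \<infinity> then esssup Tmeas g
      else ennpow (\<integral>\<^sup>+ x. ennpow (g x) (real_of_ereal p) \<partial>Tmeas) (1 / real_of_ereal p))"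

definition mixed_norm :: "ereal \<Rightarrow> ereal \<Rightarrow> (real \<Rightarrow> real \<Rightarrow> complex) \<Rightarrow> ennreal" where
  "mixed_norm p q F = Lpnorm p (\<lambda>t. Lpnorm q (\<lambda>x. ennreal (cmod (F t x))))"

definition orthonormal_system :: "(nat \<Rightarrow> real \<Rightarrow> complex) \<Rightarrow> bool" where
  "orthonormal_system f \<longleftrightarrow>
     (\<forall>j. f j \<in> borel_measurable Tmeas \<and> integrable Tmeas (\<lambda>x. (cmod (f j x))^2)) \<and>
     (\<forall>j k. integral\<^sup>L Tmeas (\<lambda>x. f j x * cnj (f k x)) = (if j = k then 1 else 0))"

definition in_lbeta :: "real \<Rightarrow> (nat \<Rightarrow> complex) \<Rightarrow> bool" where
  "in_lbeta \<beta> lam \<longleftrightarrow> summable (\<lambda>j. cmod (lam j) powr \<beta>)"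

definition lbeta_norm :: "real \<Rightarrow> (nat \<Rightarrow> complex) \<Rightarrow> real" where
  "lbeta_norm \<beta> lam = (\<Sum>j. cmod (lam j) powr \<beta>) powr (1 / \<beta>)"

definition density :: "nat \<Rightarrow> (nat \<Rightarrow> complex) \<Rightarrow> (nat \<Rightarrow> real \<Rightarrow> complex) \<Rightarrow> real \<Rightarrow> real \<Rightarrow> complex" where
  "density N lam f t x = (\<Sum>j. lam j * complex_of_real ((cmod (DN N (f j) t x))^2))"

definition pow_inv :: "nat \<Rightarrow> ereal \<Rightarrow> real" where
  "pow_inv N p = (if p = \<infinity> then 1 else real N powr (1 / real_of_ereal p))"

end

theory Submission
  imports Defs
begin

text \<open>Test the estimate on the orthonormal system f_j(x) = e^{ijx} / sqrt(2 pi), 0 <= j < N,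
  with lambda the indicator of {0..<N}. Each f_j has a single Fourier mode inside S_N, so
  |D_N f_j|^2 = 1/(8 pi^3) everywhere and the density is the constant N/(8 pi^3), whose mixed
  norms all grow like N. The right-hand side is C N^(1/p) N^(1/beta), and 1/p + 1/beta < 1 is
  exactly beta > 2q/(q+1) in (i), resp. beta > 2 in (ii).\<close>

lemma emeasure_Tmeas_space: "emeasure Tmeas (space Tmeas) = ennreal (2*pi)"
proof -
  have "emeasure Tmeas (space Tmeas) = emeasure lebesgue torus"
    by (simp add: Tmeas_def torus_def emeasure_restrict_space)
  also have "\<dots> = ennreal (2*pi)"
    by (simp add: torus_def emeasure_completion emeasure_lborel_Ico)
  finally show ?thesis .
qed

lemma finite_measure_Tmeas: "finite_measure Tmeas"
  by (rule finite_measureI) (simp add: emeasure_Tmeas_space)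

lemma integrable_Tmeas_exp:
  "integrable Tmeas (\<lambda>x. c * exp (\<i> * complex_of_real (x * a)))"
proof (rule finite_measure.integrable_const_bound[OF finite_measure_Tmeas, where B = "cmod c"])
  show "AE x in Tmeas. norm (c * exp (\<i> * complex_of_real (x * a))) \<le> cmod c"
    by (simp add: norm_mult)
  show "(\<lambda>x. c * exp (\<i> * complex_of_real (x * a))) \<in> borel_measurable Tmeas"
    unfolding Tmeas_def
    by (intro continuous_imp_measurable_on_sets_lebesgue continuous_intros) (auto simp: torus_def)
qed

lemma integral_Tmeas_exp_int:
  fixes m :: int
  shows "integral\<^sup>L Tmeas (\<lambda>x. exp (\<i> * complex_of_real (x * real_of_int m)))
           = (if m = 0 then 2*pi else 0)"
proof -
  let ?f = "\<lambda>x. exp (\<i> * complex_of_real (x * real_of_int m))"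
  have "(?f has_integral integral\<^sup>L Tmeas ?f) torus"
    unfolding Tmeas_def using integrable_Tmeas_exp[of 1 "real_of_int m"]
    by (intro has_integral_integral_lebesgue_on) (auto simp: Tmeas_def torus_def)
  then have lebesgue: "(?f has_integral integral\<^sup>L Tmeas ?f) {0..2*pi}"
    unfolding torus_def
    by (rule has_integral_spike_set_eq[THEN iffD1, rotated -1])
       (auto intro: negligible_subset[of "{2*pi}"])
  have "(?f has_integral (if m = 0 then 2*pi else 0)) {0..2*pi}"
  proof (cases "m = 0")
    case True
    then show ?thesis
      using has_integral_const_real[of "1::complex" 0 "2*pi"] by (simp add: scaleR_conv_of_real)
  next
    case False
    define F where "F = (\<lambda>x. ?f x / (\<i> * of_int m))"
    have "(F has_vector_derivative ?f x) (at x within {0..2*pi})" for x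
    proof -
      have "((\<lambda>z. exp (\<i> * of_int m * z) / (\<i> * of_int m)) has_field_derivative
             exp (\<i> * of_int m * of_real x)) (at (of_real x))"
        using False by (auto intro!: derivative_eq_intros)
      from has_vector_derivative_real_field[OF this] show ?thesis
        by (simp add: F_def mult_ac)
    qed
    then have "(?f has_integral (F (2*pi) - F 0)) {0..2*pi}"
      by (intro fundamental_theorem_of_calculus) auto
    moreover have "F (2*pi) = F 0"
      using exp_integer_2pi[of "of_int m"] by (simp add: F_def mult_ac)
    ultimately show ?thesis
      using False by simp
  qed
  with lebesgue show ?thesis
    using has_integral_unique by blast
qed

definition exp_basis :: "nat \<Rightarrow> real \<Rightarrow> complex" where
  "exp_basis j x = complex_of_real (1 / sqrt (2*pi)) * exp (\<i> * complex_of_real (x * real j))"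

lemma exp_basis_mult_cnj:
  "exp_basis j x * cnj (exp_basis k x) =
     complex_of_real (1/(2*pi)) * exp (\<i> * complex_of_real (x * real_of_int (int j - int k)))"
proof -
  have "exp (\<i> * complex_of_real (x * real j)) * cnj (exp (\<i> * complex_of_real (x * real k)))
      = exp (\<i> * complex_of_real (x * real_of_int (int j - int k)))"
    by (simp add: exp_cnj exp_add[symmetric] algebra_simps)
  moreover have "complex_of_real (1 / sqrt (2*pi)) * complex_of_real (1 / sqrt (2*pi))
      = complex_of_real (1/(2*pi))"
    by (simp flip: of_real_mult)
  ultimately show ?thesis
    unfolding exp_basis_def by (simp add: mult_ac)
qed

lemma orthonormal_system_exp_basis: "orthonormal_system exp_basis"
  unfolding orthonormal_system_def
proof (intro conjI allI)
  fix j
  show "exp_basis j \<in> borel_measurable Tmeas"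
    unfolding Tmeas_def exp_basis_def
    by (intro continuous_imp_measurable_on_sets_lebesgue continuous_intros) (auto simp: torus_def)
  have "cmod (exp_basis j x) = 1 / sqrt (2*pi)" for x
    unfolding exp_basis_def norm_mult norm_exp_i_times norm_of_real by simp
  then have "(\<lambda>x. (cmod (exp_basis j x))^2) = (\<lambda>x. 1/(2*pi))"
    by (simp add: power_divide)
  then show "integrable Tmeas (\<lambda>x. (cmod (exp_basis j x))^2)"
    using finite_measure.integrable_const[OF finite_measure_Tmeas] by simp
next
  fix j k
  show "integral\<^sup>L Tmeas (\<lambda>x. exp_basis j x * cnj (exp_basis k x)) = (if j = k then 1 else 0)"
    unfolding exp_basis_mult_cnj integral_mult_right_zero integral_Tmeas_exp_int by simp
qed

lemma fourier_coeff_exp_basis: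
  "fourier_coeff (exp_basis j) n = (if n = int j then complex_of_real (1 / sqrt (2*pi)) else 0)"
proof -
  have "(\<lambda>x. exp (- \<i> * complex_of_real (x * real_of_int n)) * exp_basis j x) =
        (\<lambda>x. complex_of_real (1 / sqrt (2*pi)) *
               exp (\<i> * complex_of_real (x * real_of_int (int j - n))))"
    by (rule ext) (simp add: exp_basis_def exp_add[symmetric] algebra_simps)
  note integrand = this
  show ?thesis
    unfolding fourier_coeff_def integrand integral_mult_right_zero integral_Tmeas_exp_int by simp
qed

lemma norm_DN_exp_basis:
  assumes "j \<le> N"
  shows "(cmod (DN N (exp_basis j) t x))^2 = 1 / (8*pi^3)"
proof -
  define E where "E n = exp (\<i> * complex_of_real (x * real_of_int n
               + t * sqrt ((real_of_int n)^2 + (real_of_int n)^4)))" for n :: int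
  have "(\<Sum>n\<in>{- int N..int N}. fourier_coeff (exp_basis j) n * E n) =
      (\<Sum>n\<in>{- int N..int N}. (if n = int j then complex_of_real (1 / sqrt (2*pi)) * E n else 0))"
    by (intro sum.cong) (auto simp: fourier_coeff_exp_basis)
  also have "\<dots> = complex_of_real (1 / sqrt (2*pi)) * E (int j)"
    using assms by (subst sum.delta) auto
  finally have "DN N (exp_basis j) t x
      = complex_of_real (1 / (2*pi)) * (complex_of_real (1 / sqrt (2*pi)) * E (int j))"
    by (simp add: DN_def E_def)
  moreover have "cmod (E (int j)) = 1"
    unfolding E_def by (rule norm_exp_i_times)
  ultimately have "cmod (DN N (exp_basis j) t x) = 1 / (2*pi) * (1 / sqrt (2*pi))"
    by (simp add: norm_divide norm_mult)
  then have "(cmod (DN N (exp_basis j) t x))^2 = (1/(2*pi))^2 * (1 / sqrt (2*pi))^2"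
    by (simp add: power_mult_distrib power_divide)
  also have "\<dots> = 1 / (8*pi^3)"
    by (simp add: power_divide power2_eq_square field_simps eval_nat_numeral)
  finally show ?thesis .
qed

lemma density_exp_basis:
  "density N (indicator {..<N}) exp_basis t x = complex_of_real (real N / (8*pi^3))"
proof -
  have "density N (indicator {..<N}) exp_basis t x
      = (\<Sum>j<N. complex_of_real ((cmod (DN N (exp_basis j) t x))^2))"
    unfolding density_def by (subst suminf_finite[of "{..<N}"]) auto
  also have "\<dots> = (\<Sum>j<N. complex_of_real (1 / (8*pi^3)))"
    by (intro sum.cong) (auto simp: norm_DN_exp_basis)
  finally show ?thesis
    by simp
qed

lemma in_lbeta_indicator: "in_lbeta \<beta> (indicator {..<N})"
  unfolding in_lbeta_def by (rule summable_finite[of "{..<N}"]) auto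

lemma lbeta_norm_indicator:
  assumes "\<beta> > 0"
  shows "lbeta_norm \<beta> (indicator {..<N}) = real N powr (1/\<beta>)"
proof -
  have "(\<Sum>j. cmod (indicator {..<N} j :: complex) powr \<beta>)
      = (\<Sum>j<N. cmod (indicator {..<N} j :: complex) powr \<beta>)"
    by (rule suminf_finite) auto
  also have "\<dots> = real N"
    using assms by simp
  finally show ?thesis
    by (simp add: lbeta_norm_def)
qed

definition Lpnorm_one :: "ereal \<Rightarrow> real" where
  "Lpnorm_one p = (if p = \<infinity> then 1 else (2*pi) powr (1 / real_of_ereal p))"

lemma Lpnorm_one_pos: "Lpnorm_one p > 0"
  by (simp add: Lpnorm_one_def)

lemma Lpnorm_const:
  assumes "r \<ge> 0" and "p > 0"
  shows "Lpnorm p (\<lambda>_. ennreal r) = ennreal (Lpnorm_one p * r)"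
proof (cases p)
  case MInf
  with assms show ?thesis by simp
next
  case PInf
  have "emeasure Tmeas (space Tmeas) \<noteq> 0"
    by (simp add: emeasure_Tmeas_space)
  with PInf show ?thesis
    by (simp add: Lpnorm_def Lpnorm_one_def esssup_const)
next
  case (real s)
  with assms have "s > 0" by simp
  have "(\<integral>\<^sup>+ x. ennpow (ennreal r) s \<partial>Tmeas) = ennreal (r powr s * (2*pi))"
    using assms emeasure_Tmeas_space by (simp add: ennpow_def ennreal_mult'')
  moreover have "(r powr s * (2*pi)) powr (1/s) = (2*pi) powr (1/s) * r"
    using assms \<open>s > 0\<close> by (simp add: powr_mult powr_powr)
  ultimately show ?thesis
    using real assms by (simp add: Lpnorm_def Lpnorm_one_def ennpow_def)
qed

lemma mixed_norm_const:
  assumes "c \<ge> 0" and "p > 0" and "q > 0"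
  shows "mixed_norm p q (\<lambda>t x. complex_of_real c) = ennreal (Lpnorm_one p * Lpnorm_one q * c)"
  using assms Lpnorm_one_pos[of q]
  by (simp add: mixed_norm_def Lpnorm_const mult.assoc)

lemma eventually_powr_less_linear:
  fixes c K C :: real
  assumes "c < 1" and "K > 0"
  shows "eventually (\<lambda>N::nat. C * real N powr c < K * real N) sequentially"
proof -
  have "(\<lambda>N::nat. \<bar>C\<bar> * real N powr (c - 1)) \<longlonglongrightarrow> 0"
    using assms(1)
    by (intro tendsto_mult_right_zero tendsto_neg_powr filterlim_real_sequentially) auto
  then have "eventually (\<lambda>N::nat. \<bar>C\<bar> * real N powr (c - 1) < K) sequentially"
    using assms(2) by (rule order_tendstoD)
  moreover have "eventually (\<lambda>N::nat. N \<ge> 1) sequentially"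
    by (rule eventually_ge_at_top)
  ultimately show ?thesis
  proof eventually_elim
    case (elim N)
    have "C * real N powr c \<le> \<bar>C\<bar> * real N powr (c - 1) * real N"
      using elim(2) by (simp add: powr_diff)
    also have "\<dots> < K * real N"
      using elim by (intro mult_strict_right_mono) auto
    finally show ?case .
  qed
qed

lemma density_mixed_norm_not_bounded:
  assumes "p > 0" and "q > 0" and "\<beta> > 0" and "a + 1/\<beta> < 1"
    and P: "\<And>N. N \<ge> 1 \<Longrightarrow> P N = real N powr a"
  shows "\<not> (\<exists>C::real. \<forall>N::nat. N \<ge> 1 \<longrightarrow>
                 (\<forall>lam f. in_lbeta \<beta> lam \<longrightarrow> orthonormal_system f \<longrightarrow>
                    mixed_norm p q (density N lam f) \<le> ennreal (C * P N * lbeta_norm \<beta> lam)))"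
proof
  assume "\<exists>C::real. \<forall>N::nat. N \<ge> 1 \<longrightarrow>
                 (\<forall>lam f. in_lbeta \<beta> lam \<longrightarrow> orthonormal_system f \<longrightarrow>
                    mixed_norm p q (density N lam f) \<le> ennreal (C * P N * lbeta_norm \<beta> lam))"
  then obtain C where C: "\<And>N lam f. N \<ge> 1 \<Longrightarrow> in_lbeta \<beta> lam \<Longrightarrow> orthonormal_system f \<Longrightarrow>
                    mixed_norm p q (density N lam f) \<le> ennreal (C * P N * lbeta_norm \<beta> lam)"
    by blast
  define K where "K = Lpnorm_one p * Lpnorm_one q / (8*pi^3)"
  have "K > 0"
    unfolding K_def using Lpnorm_one_pos[of p] Lpnorm_one_pos[of q] by simp
  then have "eventually (\<lambda>N::nat. N \<ge> 1 \<and> C * real N powr (a + 1/\<beta>) < K * real N) sequentially"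
    using assms(4) eventually_ge_at_top eventually_powr_less_linear by (auto intro: eventually_conj)
  then obtain N :: nat where "N \<ge> 1" and less: "C * real N powr (a + 1/\<beta>) < K * real N"
    by (auto dest: eventually_happens'[OF sequentially_bot])
  have "K * real N > 0"
    using \<open>K > 0\<close> \<open>N \<ge> 1\<close> by simp
  have "ennreal (K * real N) = mixed_norm p q (density N (indicator {..<N}) exp_basis)"
    unfolding density_exp_basis[abs_def] K_def using assms(1,2)
    by (subst mixed_norm_const) (auto simp: field_simps)
  also have "\<dots> \<le> ennreal (C * P N * lbeta_norm \<beta> (indicator {..<N}))"
    using C[OF \<open>N \<ge> 1\<close> in_lbeta_indicator orthonormal_system_exp_basis] .
  also have "C * P N * lbeta_norm \<beta> (indicator {..<N}) = C * real N powr (a + 1/\<beta>)"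
    using P[OF \<open>N \<ge> 1\<close>] lbeta_norm_indicator[OF assms(3)] by (simp add: powr_add)
  finally show False
    using less \<open>K * real N > 0\<close> by (simp add: ennreal_le_iff2)
qed

lemma inverse_exponents_sum_less_1:
  fixes q \<beta> a :: real
  assumes "1 \<le> q" and "\<beta> > 2 * q / (q + 1)" and "2 * a + 1 / q = 1"
  shows "\<beta> > 0" and "a + 1/\<beta> < 1"
proof -
  show "\<beta> > 0"
    using assms(1,2) by (smt (verit) divide_pos_pos)
  then have "1/\<beta> < (q + 1) / (2 * q)"
    using assms(1,2) by (simp add: field_simps)
  moreover have "(q + 1) / (2 * q) = 1 - a"
    using assms(1,3) by (simp add: field_simps)
  ultimately show "a + 1/\<beta> < 1"
    by linarith
qed

theorem theorem1p7:
  shows "(\<forall>(p::ereal) (q::real) (\<beta>::real).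
            1 \<le> q \<and>
            ((p = \<infinity> \<and> q = 1) \<or> (\<exists>p0. p = ereal p0 \<and> p0 > 0 \<and> 2 / p0 + 1 / q = 1)) \<and>
            \<beta> > 2 * q / (q + 1) \<longrightarrow>
            \<not> (\<exists>C::real. \<forall>N::nat. N \<ge> 1 \<longrightarrow>
                 (\<forall>lam f. in_lbeta \<beta> lam \<longrightarrow> orthonormal_system f \<longrightarrow>
                    mixed_norm p (ereal q) (density N lam f)
                      \<le> ennreal (C * pow_inv N p * lbeta_norm \<beta> lam))))
       \<and>
         (\<forall>\<beta>::real. \<beta> > 2 \<longrightarrow>
            \<not> (\<exists>C::real. \<forall>N::nat. N \<ge> 1 \<longrightarrow>
                 (\<forall>lam f. in_lbeta \<beta> lam \<longrightarrow> orthonormal_system f \<longrightarrow>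
                    mixed_norm 2 \<infinity> (density N lam f)
                      \<le> ennreal (C * real N powr (1/2) * lbeta_norm \<beta> lam))))"
proof (intro conjI allI impI)
  fix p :: ereal and q \<beta> :: real
  assume "1 \<le> q \<and> ((p = \<infinity> \<and> q = 1) \<or> (\<exists>p0. p = ereal p0 \<and> p0 > 0 \<and> 2 / p0 + 1 / q = 1))
            \<and> \<beta> > 2 * q / (q + 1)"
  then consider "1 \<le> q" "\<beta> > 2 * q / (q + 1)" "p = \<infinity>" "q = 1"
    | p0 where "1 \<le> q" "\<beta> > 2 * q / (q + 1)" "p = ereal p0" "p0 > 0" "2 * (1/p0) + 1 / q = 1"
    by auto
  then show "\<not> (\<exists>C. \<forall>N\<ge>1. \<forall>lam f. in_lbeta \<beta> lam \<longrightarrow> orthonormal_system f \<longrightarrow>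
      mixed_norm p (ereal q) (density N lam f) \<le> ennreal (C * pow_inv N p * lbeta_norm \<beta> lam))"
  proof cases
    case 1
    with inverse_exponents_sum_less_1[of q \<beta> 0] show ?thesis
      by (intro density_mixed_norm_not_bounded[where a = 0]) (auto simp: pow_inv_def)
  next
    case 2
    with inverse_exponents_sum_less_1[of q \<beta> "1/p0"] show ?thesis
      by (intro density_mixed_norm_not_bounded[where a = "1/p0"]) (auto simp: pow_inv_def)
  qed
next
  fix \<beta> :: real
  assume "\<beta> > 2"
  then have "1/2 + 1/\<beta> < 1"
    by (simp add: field_simps)
  with \<open>\<beta> > 2\<close> show "\<not> (\<exists>C. \<forall>N\<ge>1. \<forall>lam f. in_lbeta \<beta> lam \<longrightarrow> orthonormal_system f \<longrightarrow>
      mixed_norm 2 \<infinity> (density N lam f) \<le> ennreal (C * real N powr (1/2) * lbeta_norm \<beta> lam))"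
    by (intro density_mixed_norm_not_bounded) auto
qed

end
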